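(* Let $\mathcal{T}=(V,A,E,f,q,v_0)$ be a decorated rooted tree that has negative determinants and satisfies $f(A)\subseteq\mathbb{N}=\{0,1,2,\dots\}$. Let $v,v'\in V$ with $v<v'$ and suppose the path $\gamma=\gamma_{v,v'}=(x_0,\dots,x_n)$ is linear; let $q=q(\{x_0,x_1\},v)$ and $Q'=Q(\{x_{n-1},x_n\},v')$. (a) $q>0$, $Q'>0$, and $q\,N_{v'}-Q'\,N_v\le0$. (b) If there exists $\alpha\in A\setminus A_0$ with $\alpha>v'$, then $q\,N_{v'}-Q'\,N_v<0$.
   Context: A graph is a pair $(X_0,X_1)$ of finite sets such that each element of $X_1$ (an edge) is a $2$-element subset of $X_0$; elements of $X_0$ are cells. The valency $\delta_x$ of a cell is the number of edges containing it. A path is a tuple $(x_0,\dots,x_n)$ ($n\ge0$) of cells with $\{x_i,x_{i+1}\}$ an edge for each $i<n$, these edges pairwise distinct; a cell/edge is in the path if it is some $x_i$ / some $\{x_i,x_{i+1}\}$. The graph is a tree if any two cells $x,y$ are joined by a unique path $\gamma_{x,y}$. A decorated tree is $(V,A,E,f,q)$ with $V$ (vertices), $A$ (arrows) finite disjoint sets, $(V\cup A,E)$ a tree, every arrow of valency $1$, $f:A\to\mathbb{Z}$, $q(e,x)\in\mathbb{Z}$ for each $e\in E$, $x\in e$, with $q(e,\alpha)=1$ for $\alpha\in A$, and for each $v\in V$ and distinct edges $e,e'\ni v$, $\gcd(q(e,v),q(e',v))=1$. $A_0=\{\alpha\in A:f(\alpha)=0\}$. For $x\in V\cup A$, $e\ni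 x$: $Q(e,x)=\prod q(e',x)$ over edges $e'\ne e$ containing $x$ (empty product $=1$); $\det(\{x,y\})=q(e,x)q(e,y)-Q(e,x)Q(e,y)$ for $e=\{x,y\}$. An edge $\varepsilon$ is incident to a path $\gamma$ if it is not in $\gamma$ but contains a cell $u$ of $\gamma$; $q(\varepsilon,\gamma):=q(\varepsilon,u)$. For $v\ne\alpha$, $v\in V\cup A$, $\alpha\in A$: $x_{v,\alpha}=f(\alpha)\prod_\varepsilon q(\varepsilon,\gamma_{v,\alpha})$ over edges incident to $\gamma_{v,\alpha}$. For $v\in V\cup A_0$, $N_v=\sum_{\alpha\in A\setminus A_0}x_{v,\alpha}$. A path $(x_0,\dots,x_n)$, $n>0$, is linear if $\delta_{x_i}=2$ for all $0<i<n$. A root of $(V,A,E,f,q)$ is a vertex $v_0$ with $q(e,v_0)=1$ for every edge $e\ni v_0$ such that for every $v\in V\setminus\{v_0\}$, all edges $e\ni v$ not in $\gamma_{v_0,v}$ satisfy $q(e,v)\ge1$ and at most one of them satisfies $q(e,v)\ne1$. A decorated rooted tree is $(V,A,E,f,q,v_0)$ with $v_0$ a root. For distinct $x,y\in V\cup A$, $x<y$ means $x$ is in $\gamma_{v_0,y}$. $\mathcal{T}$ has negative determinants if $\det(e)<0$ for every edge $e=\{x,y\}$ with $x,y\in V$. *)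

theory Defs
  imports Main
begin

definition is_graph :: "'a set \<Rightarrow> 'a set set \<Rightarrow> bool" where
  "is_graph X0 X1 \<longleftrightarrow> finite X0 \<and> finite X1 \<and> (\<forall>e\<in>X1. e \<subseteq> X0 \<and> card e = 2)"

definition valency :: "'a set set \<Rightarrow> 'a \<Rightarrow> nat" where
  "valency X1 x = card {e \<in> X1. x \<in> e}"

definition path_edges :: "'a list \<Rightarrow> 'a set list" where
  "path_edges xs = map (\<lambda>(a, b). {a, b}) (zip xs (tl xs))"

definition is_path :: "'a set \<Rightarrow> 'a set set \<Rightarrow> 'a list \<Rightarrow> bool" where
  "is_path X0 X1 xs \<longleftrightarrow> xs \<noteq> [] \<and> set xs \<subseteq> X0 \<and> set (path_edges xs) \<subseteq> X1
     \<and> distinct (path_edges xs)"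

definition is_tree :: "'a set \<Rightarrow> 'a set set \<Rightarrow> bool" where
  "is_tree X0 X1 \<longleftrightarrow> is_graph X0 X1 \<and>
     (\<forall>x\<in>X0. \<forall>y\<in>X0. \<exists>!p. is_path X0 X1 p \<and> hd p = x \<and> last p = y)"

definition gpath :: "'a set \<Rightarrow> 'a set set \<Rightarrow> 'a \<Rightarrow> 'a \<Rightarrow> 'a list" where
  "gpath X0 X1 x y = (THE p. is_path X0 X1 p \<and> hd p = x \<and> last p = y)"

definition linear_path :: "'a set set \<Rightarrow> 'a list \<Rightarrow> bool" where
  "linear_path X1 xs \<longleftrightarrow> length xs \<ge> 2 \<and>
     (\<forall>i. 0 < i \<and> i < length xs - 1 \<longrightarrow> valency X1 (xs ! i) = 2)"

text \<open>f is given on all of the type but only its values on A matter; similarly q.\<close>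
definition decorated_tree ::
  "'a set \<Rightarrow> 'a set \<Rightarrow> 'a set set \<Rightarrow> ('a \<Rightarrow> int) \<Rightarrow> ('a set \<Rightarrow> 'a \<Rightarrow> int) \<Rightarrow> bool" where
  "decorated_tree V A E f q \<longleftrightarrow>
     finite V \<and> finite A \<and> V \<inter> A = {} \<and> is_tree (V \<union> A) E \<and>
     (\<forall>\<alpha>\<in>A. valency E \<alpha> = 1) \<and>
     (\<forall>e\<in>E. \<forall>\<alpha>\<in>A. \<alpha> \<in> e \<longrightarrow> q e \<alpha> = 1) \<and>
     (\<forall>v\<in>V. \<forall>e\<in>E. \<forall>e'\<in>E. v \<in> e \<and> v \<in> e' \<and> e \<noteq> e' \<longrightarrow> gcd (q e v) (q e' v) = 1)"

definition A0 :: "'a set \<Rightarrow> ('a \<Rightarrow> int) \<Rightarrow> 'a set" where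
  "A0 A f = {\<alpha> \<in> A. f \<alpha> = 0}"

definition bigQ :: "'a set set \<Rightarrow> ('a set \<Rightarrow> 'a \<Rightarrow> int) \<Rightarrow> 'a set \<Rightarrow> 'a \<Rightarrow> int" where
  "bigQ E q e x = (\<Prod>e'\<in>{e' \<in> E. x \<in> e' \<and> e' \<noteq> e}. q e' x)"

definition edge_det :: "'a set set \<Rightarrow> ('a set \<Rightarrow> 'a \<Rightarrow> int) \<Rightarrow> 'a \<Rightarrow> 'a \<Rightarrow> int" where
  "edge_det E q x y = q {x, y} x * q {x, y} y - bigQ E q {x, y} x * bigQ E q {x, y} y"

definition negative_determinants ::
  "'a set \<Rightarrow> 'a set set \<Rightarrow> ('a set \<Rightarrow> 'a \<Rightarrow> int) \<Rightarrow> bool" where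
  "negative_determinants V E q \<longleftrightarrow>
     (\<forall>x\<in>V. \<forall>y\<in>V. {x, y} \<in> E \<longrightarrow> edge_det E q x y < 0)"

definition incident_edges :: "'a set set \<Rightarrow> 'a list \<Rightarrow> 'a set set" where
  "incident_edges E \<gamma> = {\<epsilon> \<in> E. \<epsilon> \<notin> set (path_edges \<gamma>) \<and> (\<exists>u\<in>set \<gamma>. u \<in> \<epsilon>)}"

definition q_path :: "('a set \<Rightarrow> 'a \<Rightarrow> int) \<Rightarrow> 'a set \<Rightarrow> 'a list \<Rightarrow> int" where
  "q_path q \<epsilon> \<gamma> = q \<epsilon> (SOME u. u \<in> set \<gamma> \<and> u \<in> \<epsilon>)"

definition x_va ::
  "'a set \<Rightarrow> 'a set \<Rightarrow> 'a set set \<Rightarrow> ('a \<Rightarrow> int) \<Rightarrow> ('a set \<Rightarrow> 'a \<Rightarrow> int) \<Rightarrow> 'a \<Rightarrow> 'a \<Rightarrow> int" where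
  "x_va V A E f q v \<alpha> =
     f \<alpha> * (\<Prod>\<epsilon>\<in>incident_edges E (gpath (V \<union> A) E v \<alpha>). q_path q \<epsilon> (gpath (V \<union> A) E v \<alpha>))"

definition N_v ::
  "'a set \<Rightarrow> 'a set \<Rightarrow> 'a set set \<Rightarrow> ('a \<Rightarrow> int) \<Rightarrow> ('a set \<Rightarrow> 'a \<Rightarrow> int) \<Rightarrow> 'a \<Rightarrow> int" where
  "N_v V A E f q v = (\<Sum>\<alpha>\<in>A - A0 A f. x_va V A E f q v \<alpha>)"

definition is_root ::
  "'a set \<Rightarrow> 'a set \<Rightarrow> 'a set set \<Rightarrow> ('a set \<Rightarrow> 'a \<Rightarrow> int) \<Rightarrow> 'a \<Rightarrow> bool" where
  "is_root V A E q v0 \<longleftrightarrow> v0 \<in> V \<and> (\<forall>e\<in>E. v0 \<in> e \<longrightarrow> q e v0 = 1) \<and>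
     (\<forall>v\<in>V - {v0}.
        (\<forall>e\<in>E. v \<in> e \<and> e \<notin> set (path_edges (gpath (V \<union> A) E v0 v)) \<longrightarrow> q e v \<ge> 1) \<and>
        card {e \<in> E. v \<in> e \<and> e \<notin> set (path_edges (gpath (V \<union> A) E v0 v)) \<and> q e v \<noteq> 1} \<le> 1)"

definition decorated_rooted_tree ::
  "'a set \<Rightarrow> 'a set \<Rightarrow> 'a set set \<Rightarrow> ('a \<Rightarrow> int) \<Rightarrow> ('a set \<Rightarrow> 'a \<Rightarrow> int) \<Rightarrow> 'a \<Rightarrow> bool" where
  "decorated_rooted_tree V A E f q v0 \<longleftrightarrow> decorated_tree V A E f q \<and> is_root V A E q v0"

definition tree_less :: "'a set \<Rightarrow> 'a set \<Rightarrow> 'a set set \<Rightarrow> 'a \<Rightarrow> 'a \<Rightarrow> 'a \<Rightarrow> bool" where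
  "tree_less V A E v0 x y \<longleftrightarrow> x \<in> V \<union> A \<and> y \<in> V \<union> A \<and> x \<noteq> y \<and>
     x \<in> set (gpath (V \<union> A) E v0 y)"

end

theory Submission
  imports Defs
begin

text \<open>Both N-values are sums over the arrows \<alpha> with f \<alpha> \<noteq> 0, so it suffices to compare the
  contributions q x_{v',\<alpha>} and Q' x_{v,\<alpha>} of each arrow. Since x_{w,\<alpha>} is f \<alpha> times the product of
  q over the edges sticking out of the path from w to \<alpha>, everything depends on how this path
  meets \<gamma>. As \<gamma> is linear, either the path from v' to \<alpha> runs back through all of \<gamma>, and
  then the two contributions coincide, or the path from v to \<alpha> runs through all of \<gamma>. In the
  second case the two contributions are f \<alpha> Z q(e_0,v) q(e_n,v') and f \<alpha> Z Q(e_0,v) Q(e_n,v') for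
  a common factor Z \<ge> 1 (by the root conditions), and chaining the negative determinants of the
  edges of \<gamma> through its interior cells, where Q of one edge is q of the next, gives
  q(e_0,v) q(e_n,v') < Q(e_0,v) Q(e_n,v'). An arrow \<alpha> > v' always falls into the second case.\<close>

lemma length_path_edges [simp]: "length (path_edges xs) = length xs - 1"
  by (simp add: path_edges_def)

lemma path_edges_nth: "i < length xs - 1 \<Longrightarrow> path_edges xs ! i = {xs ! i, xs ! Suc i}"
  by (simp add: path_edges_def nth_tl)

lemma in_set_path_edges: "e \<in> set (path_edges xs) \<longleftrightarrow> (\<exists>i < length xs - 1. e = {xs ! i, xs ! Suc i})"
  by (auto simp: in_set_conv_nth path_edges_nth)

lemma path_edges_Nil [simp]: "path_edges [] = []"
  and path_edges_singleton [simp]: "path_edges [x] = []"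
  and path_edges_Cons_Cons [simp]: "path_edges (x # y # zs) = {x, y} # path_edges (y # zs)"
  by (simp_all add: path_edges_def)

lemma path_edges_append:
  "xs \<noteq> [] \<Longrightarrow> ys \<noteq> [] \<Longrightarrow> last xs = hd ys \<Longrightarrow>
    path_edges (xs @ tl ys) = path_edges xs @ path_edges ys"
proof (induction xs rule: induct_list012)
  case (2 x)
  then show ?case by (cases ys) auto
qed simp_all

lemma path_edges_take: "path_edges (take k xs) = take (k - 1) (path_edges xs)"
  by (rule nth_equalityI) (auto simp: path_edges_nth)

lemma path_edges_drop: "path_edges (drop k xs) = drop k (path_edges xs)"
  by (rule nth_equalityI) (auto simp: path_edges_nth add.commute)

lemma path_edges_rev: "path_edges (rev xs) = rev (path_edges xs)"
  by (rule nth_equalityI) (auto simp: path_edges_nth rev_nth insert_commute Suc_diff_Suc)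

lemma path_edge_subset: "e \<in> set (path_edges xs) \<Longrightarrow> e \<subseteq> set xs"
  unfolding in_set_path_edges by auto

lemma path_edge_at_index:
  assumes "distinct xs" "e \<in> set (path_edges xs)" "xs ! j \<in> e" "j < length xs"
  obtains "0 < j" "e = {xs ! (j - 1), xs ! j}" | "j < length xs - 1" "e = {xs ! j, xs ! Suc j}"
proof -
  obtain i where i: "i < length xs - 1" "e = {xs ! i, xs ! Suc i}"
    using assms(2) unfolding in_set_path_edges by blast
  have "xs ! j = xs ! i \<or> xs ! j = xs ! Suc i" using assms(3) i(2) by simp
  then have "j = i \<or> j = Suc i"
    using nth_eq_iff_index_eq[OF assms(1,4)] i(1) by auto
  then show thesis
  proof
    assume "j = i"
    then show thesis using i by (intro that(2)) auto
  next
    assume "j = Suc i"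
    then show thesis using i by (intro that(1)) auto
  qed
qed

lemma path_edge_at_hd:
  assumes "distinct xs" "e \<in> set (path_edges xs)" "hd xs \<in> e"
  shows "e = {xs ! 0, xs ! 1}"
proof -
  have "xs \<noteq> []" using assms(2) by auto
  then have "xs ! 0 \<in> e" "0 < length xs" using assms(3) by (simp_all add: hd_conv_nth)
  then show ?thesis
  proof (rule path_edge_at_index[OF assms(1,2)])
    show "e = {xs ! 0, xs ! Suc 0} \<Longrightarrow> ?thesis" by simp
  qed simp
qed

lemma path_edge_at_last:
  assumes "distinct xs" "e \<in> set (path_edges xs)" "last xs \<in> e"
  shows "e = {xs ! (length xs - 2), last xs}"
proof -
  have ne: "xs \<noteq> []" using assms(2) by auto
  then have l: "last xs = xs ! (length xs - 1)" by (simp add: last_conv_nth)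
  with assms(3) ne have "xs ! (length xs - 1) \<in> e" "length xs - 1 < length xs" by simp_all
  then show ?thesis
  proof (rule path_edge_at_index[OF assms(1,2)])
    assume "e = {xs ! (length xs - 1 - 1), xs ! (length xs - 1)}"
    then show ?thesis by (simp add: l numeral_2_eq_2)
  qed simp
qed

lemma is_path_take: "is_path X E p \<Longrightarrow> 0 < k \<Longrightarrow> is_path X E (take k p)"
  unfolding is_path_def path_edges_take by (auto dest: in_set_takeD)

lemma is_path_drop: "is_path X E p \<Longrightarrow> k < length p \<Longrightarrow> is_path X E (drop k p)"
  unfolding is_path_def path_edges_drop by (auto dest: in_set_dropD)

lemma is_path_rev: "is_path X E p \<Longrightarrow> is_path X E (rev p)"
  unfolding is_path_def path_edges_rev by auto

lemma is_path_singleton: "x \<in> X \<Longrightarrow> is_path X E [x]"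
  unfolding is_path_def by auto

lemma is_path_edge: "is_path X E p \<Longrightarrow> i < length p - 1 \<Longrightarrow> {p ! i, p ! Suc i} \<in> E"
  unfolding is_path_def using in_set_path_edges by blast

lemma is_path_nonempty: "is_path X E p \<Longrightarrow> p \<noteq> []"
  by (simp add: is_path_def)

lemma is_path_subset: "is_path X E p \<Longrightarrow> u \<in> set p \<Longrightarrow> u \<in> X"
  by (auto simp: is_path_def)

lemma edge_at_valency_two_cell:
  assumes p: "is_path X E p" and j: "0 < j" "j < length p - 1"
    and val: "valency E (p ! j) = 2" and e: "e \<in> E" "p ! j \<in> e"
  shows "e \<in> set (path_edges p)"
proof -
  have d: "distinct (path_edges p)" "set (path_edges p) \<subseteq> E"
    using p unfolding is_path_def by auto
  have j1: "j - 1 < length (path_edges p)" "j < length (path_edges p)" using j by auto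
  define e1 e2 where "e1 = path_edges p ! (j - 1)" and "e2 = path_edges p ! j"
  have in_p: "e1 \<in> set (path_edges p)" "e2 \<in> set (path_edges p)"
    unfolding e1_def e2_def using j1 by simp_all
  have "e1 \<noteq> e2" unfolding e1_def e2_def using nth_eq_iff_index_eq[OF d(1) j1] j by simp
  moreover have "p ! j \<in> e1" "p ! j \<in> e2"
    unfolding e1_def e2_def using j by (simp_all add: path_edges_nth)
  ultimately have "{e1, e2} \<subseteq> {e \<in> E. p ! j \<in> e}" and "card {e1, e2} = 2"
    using in_p d(2) by auto
  moreover have card_at: "card {e \<in> E. p ! j \<in> e} = 2" using val by (simp add: valency_def)
  moreover have "finite {e \<in> E. p ! j \<in> e}" using card_at by (intro card_ge_0_finite) simp
  ultimately have "{e1, e2} = {e \<in> E. p ! j \<in> e}" by (intro card_subset_eq) simp_all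
  then have "e \<in> {e1, e2}" using e by simp
  then show ?thesis using in_p by auto
qed

lemma linear_path_rev:
  assumes "linear_path E g"
  shows "linear_path E (rev g)"
  unfolding linear_path_def
proof (intro conjI allI impI)
  fix i assume i: "0 < i \<and> i < length (rev g) - 1"
  then have "i < length g" by auto
  then have "rev g ! i = g ! (length g - Suc i)" by (rule rev_nth)
  moreover have "0 < length g - Suc i" "length g - Suc i < length g - 1" using i by auto
  ultimately show "valency E (rev g ! i) = 2" using assms unfolding linear_path_def by simp
qed (use assms in \<open>simp add: linear_path_def\<close>)

definition bigQ_off :: "'a set set \<Rightarrow> ('a set \<Rightarrow> 'a \<Rightarrow> int) \<Rightarrow> 'a set set \<Rightarrow> 'a \<Rightarrow> int" where
  "bigQ_off E q F x = (\<Prod>e\<in>{e \<in> E. x \<in> e \<and> e \<notin> F}. q e x)"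

definition path_weight :: "'a set set \<Rightarrow> ('a set \<Rightarrow> 'a \<Rightarrow> int) \<Rightarrow> 'a list \<Rightarrow> int" where
  "path_weight E q p = (\<Prod>u\<in>set p. bigQ_off E q (set (path_edges p)) u)"

lemma bigQ_eq_bigQ_off: "bigQ E q e x = bigQ_off E q {e} x"
  unfolding bigQ_def bigQ_off_def by simp

lemma bigQ_off_cong:
  assumes "\<And>e. e \<in> E \<Longrightarrow> x \<in> e \<Longrightarrow> e \<in> F \<longleftrightarrow> e \<in> F'"
  shows "bigQ_off E q F x = bigQ_off E q F' x"
proof -
  have "{e \<in> E. x \<in> e \<and> e \<notin> F} = {e \<in> E. x \<in> e \<and> e \<notin> F'}" using assms by blast
  then show ?thesis unfolding bigQ_off_def by simp
qed

lemma bigQ_off_all_excluded: "(\<And>e. e \<in> E \<Longrightarrow> x \<in> e \<Longrightarrow> e \<in> F) \<Longrightarrow> bigQ_off E q F x = 1"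
  unfolding bigQ_off_def by (metis (mono_tags, lifting) mem_Collect_eq prod.neutral)

lemma bigQ_off_insert:
  assumes "finite E" "e \<in> E" "x \<in> e" "e \<notin> F"
  shows "bigQ_off E q F x = q e x * bigQ_off E q (insert e F) x"
proof -
  have "{e' \<in> E. x \<in> e' \<and> e' \<notin> F} = insert e {e' \<in> E. x \<in> e' \<and> e' \<notin> insert e F}"
    using assms by blast
  then show ?thesis unfolding bigQ_off_def using assms(1) by simp
qed

lemma mult_ratio_less_trans:
  fixes a b c s x y :: int
  assumes "0 < s" "0 < a" "0 < b" "s * y < x * b" "a * x < c * s"
  shows "a * y < c * b"
proof -
  have "s * (a * y) = a * (s * y)" by simp
  also have "\<dots> < a * (x * b)" using assms by (intro mult_strict_left_mono) auto
  also have "\<dots> = (a * x) * b" by simp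
  also have "\<dots> < (c * s) * b" using assms by (intro mult_strict_right_mono) auto
  also have "\<dots> = s * (c * b)" by simp
  finally show ?thesis using assms(1) by simp
qed

locale tree =
  fixes X :: "'a set" and E :: "'a set set"
  assumes is_tree: "is_tree X E"
begin

lemma finite_edges: "finite E"
  and card_edge: "e \<in> E \<Longrightarrow> card e = 2"
  and edge_subset: "e \<in> E \<Longrightarrow> e \<subseteq> X"
  using is_tree unfolding is_tree_def is_graph_def by auto

lemma
  assumes "x \<in> X" "y \<in> X"
  shows is_path_gpath: "is_path X E (gpath X E x y)"
    and hd_gpath: "hd (gpath X E x y) = x"
    and last_gpath: "last (gpath X E x y) = y"
proof -
  have "\<exists>!p. is_path X E p \<and> hd p = x \<and> last p = y"
    using is_tree assms unfolding is_tree_def by blast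
  then have "is_path X E (gpath X E x y) \<and> hd (gpath X E x y) = x \<and> last (gpath X E x y) = y"
    unfolding gpath_def by (rule theI')
  then show "is_path X E (gpath X E x y)" "hd (gpath X E x y) = x" "last (gpath X E x y) = y"
    by auto
qed

lemma gpath_eq: "is_path X E p \<Longrightarrow> gpath X E (hd p) (last p) = p"
  unfolding gpath_def
proof (rule the1_equality)
  assume p: "is_path X E p"
  then have "hd p \<in> X" "last p \<in> X" by (simp_all add: is_path_subset is_path_nonempty)
  then show "\<exists>!p'. is_path X E p' \<and> hd p' = hd p \<and> last p' = last p"
    using is_tree unfolding is_tree_def by blast
qed auto

lemma gpath_refl: "x \<in> X \<Longrightarrow> gpath X E x x = [x]"
  using gpath_eq[OF is_path_singleton[of x X E]] by simp

lemma gpath_sym: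
  assumes "x \<in> X" "y \<in> X"
  shows "gpath X E y x = rev (gpath X E x y)"
  using gpath_eq[OF is_path_rev[OF is_path_gpath[OF assms]]] hd_gpath[OF assms] last_gpath[OF assms]
  by (simp add: hd_rev last_rev)

lemma gpath_take_drop:
  assumes p: "is_path X E p" and i: "i < length p"
  shows gpath_take: "gpath X E (hd p) (p ! i) = take (Suc i) p"
    and gpath_drop: "gpath X E (p ! i) (last p) = drop i p"
proof -
  have "hd (take (Suc i) p) = hd p" by (cases p) simp_all
  moreover have "last (take (Suc i) p) = p ! i" using i by (simp add: take_Suc_conv_app_nth)
  ultimately show "gpath X E (hd p) (p ! i) = take (Suc i) p"
    using gpath_eq[OF is_path_take[OF p, of "Suc i"]] by simp
  show "gpath X E (p ! i) (last p) = drop i p"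
    using gpath_eq[OF is_path_drop[OF p i]] i by (simp add: hd_drop_conv_nth)
qed

lemma gpath_split:
  assumes p: "is_path X E p" and y: "y \<in> set p"
  shows "p = gpath X E (hd p) y @ tl (gpath X E y (last p))"
proof -
  obtain i where i: "i < length p" "y = p ! i" using y by (auto simp: in_set_conv_nth)
  then show ?thesis using gpath_take_drop[OF p i(1)] by (simp add: tl_drop drop_Suc[symmetric])
qed

lemma path_edges_gpath_prefix:
  assumes p: "is_path X E p" and u: "u \<in> set p"
  shows "set (path_edges (gpath X E (hd p) u)) \<subseteq> set (path_edges p)"
proof -
  obtain i where i: "i < length p" "u = p ! i" using u by (auto simp: in_set_conv_nth)
  show ?thesis
    unfolding i(2) gpath_take[OF p i(1)] path_edges_take by (rule set_take_subset)
qed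

lemma distinct_path: "is_path X E p \<Longrightarrow> distinct p"
proof (rule ccontr)
  assume p: "is_path X E p" and "\<not> distinct p"
  then obtain i j where ij: "i < j" "j < length p" "p ! i = p ! j"
    by (metis distinct_conv_nth linorder_neqE_nat)
  define s where "s = drop i (take (Suc j) p)"
  have s: "is_path X E s"
    unfolding s_def using ij by (intro is_path_drop is_path_take p) auto
  have "hd s = p ! i" "last s = p ! i"
    unfolding s_def using ij by (auto simp: hd_drop_conv_nth last_conv_nth)
  moreover have "hd s \<in> X" using s by (simp add: is_path_subset is_path_nonempty)
  ultimately have "s = [p ! i]" using gpath_eq[OF s] gpath_refl by metis
  then have "length s = 1" by simp
  moreover have "length s = Suc j - i" unfolding s_def using ij by simp
  ultimately show False using ij(1) by linarith
qed

lemma is_path_append: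
  assumes p: "is_path X E xs" "is_path X E ys" and l: "last xs = hd ys"
    and d: "set xs \<inter> set ys \<subseteq> {hd ys}"
  shows "is_path X E (xs @ tl ys)"
proof -
  have ne: "xs \<noteq> []" "ys \<noteq> []" using p by (simp_all add: is_path_nonempty)
  have "set (path_edges xs) \<inter> set (path_edges ys) = {}"
  proof (rule ccontr)
    assume "\<not> ?thesis"
    then obtain e where e: "e \<in> set (path_edges xs)" "e \<in> set (path_edges ys)" by blast
    then have "e \<subseteq> {hd ys}" using d path_edge_subset by blast
    moreover have "card e = 2" using e p card_edge unfolding is_path_def by auto
    moreover have "card e \<le> card {hd ys}" by (rule card_mono) (use calculation in auto)
    ultimately show False by simp
  qed
  moreover have "set (tl ys) \<subseteq> set ys" using ne(2) by (cases ys) auto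
  ultimately show ?thesis
    using p ne l unfolding is_path_def path_edges_append[OF ne l] by auto
qed

text \<open>Otherwise the two cells would be joined by two different paths.\<close>
lemma edge_of_path_cells:
  assumes p: "is_path X E p" and e: "e \<in> E" "a \<in> e" "b \<in> e" "a \<noteq> b"
    and ab: "a \<in> set p" "b \<in> set p"
  shows "e \<in> set (path_edges p)"
proof -
  have "card e = 2" using card_edge e(1) by simp
  then have e_ab: "e = {a, b}" using e(2-4) by (auto simp: card_2_iff)
  have adjacent: "{p ! i, p ! j} \<in> set (path_edges p)"
    if ij: "i < j" "j < length p" and E: "{p ! i, p ! j} \<in> E" for i j
  proof -
    define t where "t = take (Suc j) p"
    have t: "is_path X E t" unfolding t_def by (rule is_path_take[OF p]) simp
    have lt: "last t = p ! j" "t ! i = p ! i" "i < length t"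
      unfolding t_def using ij by (auto simp: take_Suc_conv_app_nth nth_append)
    have "is_path X E [p ! i, p ! j]" using E edge_subset unfolding is_path_def by auto
    then have "[p ! i, p ! j] = gpath X E (p ! i) (p ! j)" using gpath_eq by fastforce
    also have "\<dots> = drop i t" using gpath_drop[OF t lt(3)] lt by simp
    finally have "length (drop i t) = 2" by (metis length_Cons list.size(3) numeral_2_eq_2)
    then have "j = Suc i" unfolding t_def using ij by simp
    then show ?thesis using ij unfolding in_set_path_edges by (intro exI[of _ i]) auto
  qed
  obtain i j where ij: "i < length p" "a = p ! i" "j < length p" "b = p ! j"
    using ab by (auto simp: in_set_conv_nth)
  then have "i \<noteq> j" using e(4) by auto
  then consider "i < j" | "j < i" by linarith
  then show ?thesis
  proof cases
    case 1
    then show ?thesis using adjacent[of i j] ij e(1) e_ab by simp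
  next
    case 2
    then show ?thesis using adjacent[of j i] ij e(1) e_ab by (simp add: insert_commute)
  qed
qed

lemma linear_path_interior_edges:
  assumes g: "is_path X E g" "linear_path E g" and i: "0 < i" "i < length g - 1"
    and e: "e \<in> E" "g ! i \<in> e"
  shows "e = {g ! (i - 1), g ! i} \<or> e = {g ! i, g ! Suc i}"
proof -
  have "valency E (g ! i) = 2" using g(2) i unfolding linear_path_def by blast
  then have "e \<in> set (path_edges g)" using edge_at_valency_two_cell[OF g(1) i _ e] by simp
  then show ?thesis
    by (rule path_edge_at_index[OF distinct_path[OF g(1)] _ e(2)]) (use i in auto)
qed

lemma bigQ_linear_path_interior:
  assumes g: "is_path X E g" "linear_path E g" and i: "0 < i" "i < length g - 1"
  shows "bigQ E q {g ! (i - 1), g ! i} (g ! i) = q {g ! i, g ! Suc i} (g ! i)"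
    and "bigQ E q {g ! i, g ! Suc i} (g ! i) = q {g ! (i - 1), g ! i} (g ! i)"
proof -
  have d: "distinct (path_edges g)" using g(1) by (simp add: is_path_def)
  have "path_edges g ! (i - 1) \<noteq> path_edges g ! i"
    using nth_eq_iff_index_eq[OF d, of "i - 1" i] i by simp
  then have ne: "{g ! (i - 1), g ! i} \<noteq> {g ! i, g ! Suc i}"
    using i by (simp add: path_edges_nth)
  have "{g ! (i - 1), g ! i} \<in> E" "{g ! i, g ! Suc i} \<in> E"
    using is_path_edge[OF g(1), of "i - 1"] is_path_edge[OF g(1), of i] i by simp_all
  then have "{e \<in> E. g ! i \<in> e} = {{g ! (i - 1), g ! i}, {g ! i, g ! Suc i}}"
    using linear_path_interior_edges[OF g i] by blast
  then have "{e \<in> E. g ! i \<in> e \<and> e \<noteq> {g ! (i - 1), g ! i}} = {{g ! i, g ! Suc i}}"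
    and "{e \<in> E. g ! i \<in> e \<and> e \<noteq> {g ! i, g ! Suc i}} = {{g ! (i - 1), g ! i}}"
    using ne by blast+
  then show "bigQ E q {g ! (i - 1), g ! i} (g ! i) = q {g ! i, g ! Suc i} (g ! i)"
    and "bigQ E q {g ! i, g ! Suc i} (g ! i) = q {g ! (i - 1), g ! i} (g ! i)"
    unfolding bigQ_def by simp_all
qed

text \<open>Interior cells of a linear path have no edges besides the two of the path.\<close>
lemma linear_path_followed:
  assumes g: "is_path X E g" "linear_path E g" and p: "is_path X E p"
    and hd: "hd p = hd g" and g1: "g ! 1 \<in> set p"
    and stop: "\<And>i. 0 < i \<Longrightarrow> i < length g - 1 \<Longrightarrow> last p \<noteq> g ! i"
  shows "last g \<in> set p"
proof -
  have len: "length g \<ge> 2" and val: "\<And>i. 0 < i \<Longrightarrow> i < length g - 1 \<Longrightarrow> valency E (g ! i) = 2"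
    using g(2) unfolding linear_path_def by auto
  have dg: "distinct g" using distinct_path[OF g(1)] .
  have p0: "p \<noteq> []" using is_path_nonempty[OF p] .
  have hd_g: "hd g = g ! 0" using is_path_nonempty[OF g(1)] by (simp add: hd_conv_nth)
  have "g ! k \<in> set p" if "1 \<le> k" "k \<le> length g - 1" for k
    using that
  proof (induction k rule: dec_induct)
    case base
    then show ?case using g1 by simp
  next
    case (step k)
    then obtain j where j: "j < length p" "p ! j = g ! k" by (auto simp: in_set_conv_nth)
    have k: "0 < k" "k < length g - 1" using step by auto
    have "j \<noteq> 0"
    proof
      assume "j = 0"
      then have "g ! k = g ! 0" using j hd p0 hd_g by (simp add: hd_conv_nth)
      moreover have "k < length g" "0 < length g" using k by linarith+
      ultimately show False using nth_eq_iff_index_eq[OF dg, of k 0] k(1) by simp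
    qed
    moreover have "j \<noteq> length p - 1"
    proof
      assume "j = length p - 1"
      then have "last p = g ! k" using j p0 by (simp add: last_conv_nth)
      then show False using stop[OF k] by simp
    qed
    ultimately have "0 < j" "j < length p - 1" using j by auto
    moreover have "{p ! j, g ! Suc k} \<in> E" using is_path_edge[OF g(1), of k] j k by simp
    ultimately have "{p ! j, g ! Suc k} \<in> set (path_edges p)"
      using edge_at_valency_two_cell[OF p] val[OF k] j by simp
    then show ?case using path_edge_subset by blast
  qed
  moreover have "1 \<le> length g - 1" using len by linarith
  ultimately have "g ! (length g - 1) \<in> set p" by simp
  then show ?thesis using is_path_nonempty[OF g(1)] by (simp add: last_conv_nth)
qed

lemma paths_meet_at_junction:
  assumes r: "is_path X E r" and p: "is_path X E p" and junction: "last r = hd p"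
    and len: "length r \<ge> 2" and avoid: "r ! (length r - 2) \<notin> set p"
  shows "set r \<inter> set p = {last r}"
proof -
  have r0: "r \<noteq> []" and p0: "p \<noteq> []" using r p by (simp_all add: is_path_nonempty)
  have "w = last r" if w: "w \<in> set r" "w \<in> set p" for w
  proof (rule ccontr)
    assume wn: "w \<noteq> last r"
    obtain i where i: "i < length r" "w = r ! i" using w(1) by (auto simp: in_set_conv_nth)
    then have "i \<noteq> length r - 1" using wn r0 by (auto simp: last_conv_nth)
    then have i2: "i \<le> length r - 2" using i by linarith
    have "r ! (length r - 2) = drop i r ! (length r - 2 - i)" using i2 len by simp
    moreover have "length r - 2 - i < length (drop i r)" using i2 len by simp
    ultimately have "r ! (length r - 2) \<in> set (gpath X E w (last r))"
      unfolding gpath_drop[OF r i(1), folded i(2)] by (metis nth_mem)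
    moreover have "w \<in> X" "last r \<in> X" using w r r0 by (simp_all add: is_path_subset)
    ultimately have "r ! (length r - 2) \<in> set (gpath X E (last r) w)"
      using gpath_sym[of "last r" w] by simp
    moreover obtain j where j: "j < length p" "w = p ! j" using w(2) by (auto simp: in_set_conv_nth)
    then have "gpath X E (last r) w = take (Suc j) p" using gpath_take[OF p j(1)] junction by simp
    ultimately show False using avoid by (auto dest: in_set_takeD)
  qed
  moreover have "last r \<in> set r" using r0 by (rule last_in_set)
  moreover have "last r \<in> set p" unfolding junction using p0 by (rule hd_in_set)
  ultimately show ?thesis by blast
qed

lemma prod_incident_edges_eq_path_weight:
  assumes p: "is_path X E p"
  shows "(\<Prod>\<epsilon>\<in>incident_edges E p. q_path q \<epsilon> p) = path_weight E q p"
proof -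
  define S where "S u = {\<epsilon> \<in> E. u \<in> \<epsilon> \<and> \<epsilon> \<notin> set (path_edges p)}" for u
  have unique_cell: "u' = u" if "u \<in> set p" "\<epsilon> \<in> S u" "u' \<in> set p" "u' \<in> \<epsilon>" for u u' \<epsilon>
    using edge_of_path_cells[OF p, of \<epsilon> u u'] that unfolding S_def by blast
  have "incident_edges E p = (\<Union>u\<in>set p. S u)" unfolding incident_edges_def S_def by blast
  then have "(\<Prod>\<epsilon>\<in>incident_edges E p. q_path q \<epsilon> p) = (\<Prod>u\<in>set p. \<Prod>\<epsilon>\<in>S u. q_path q \<epsilon> p)"
  proof (simp only:, intro prod.UNION_disjoint ballI impI)
    show "finite (S u)" for u unfolding S_def using finite_edges by simp
    show "S u \<inter> S u' = {}" if "u \<in> set p" "u' \<in> set p" "u \<noteq> u'" for u u'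
      using that unique_cell unfolding S_def by blast
  qed simp
  also have "\<dots> = (\<Prod>u\<in>set p. \<Prod>\<epsilon>\<in>S u. q \<epsilon> u)"
  proof (intro prod.cong refl)
    fix u \<epsilon> assume u: "u \<in> set p" and e: "\<epsilon> \<in> S u"
    have "(SOME u'. u' \<in> set p \<and> u' \<in> \<epsilon>) = u"
    proof (rule some_equality)
      show "u \<in> set p \<and> u \<in> \<epsilon>" using u e unfolding S_def by simp
    qed (use unique_cell[OF u e] in blast)
    then show "q_path q \<epsilon> p = q \<epsilon> u" unfolding q_path_def by simp
  qed
  finally show ?thesis unfolding path_weight_def bigQ_off_def S_def .
qed

lemma path_weight_extract_edge:
  assumes p: "is_path X E p" and e: "e \<in> E" "e \<notin> set (path_edges p)" and u: "u \<in> set p" "u \<in> e"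
    and only_u: "\<And>w. w \<in> set p \<Longrightarrow> w \<in> e \<Longrightarrow> w = u"
  shows "path_weight E q p = q e u * (\<Prod>w\<in>set p. bigQ_off E q (insert e (set (path_edges p))) w)"
proof -
  let ?F = "set (path_edges p)"
  have "path_weight E q p = bigQ_off E q ?F u * (\<Prod>w\<in>set p - {u}. bigQ_off E q ?F w)"
    unfolding path_weight_def using u(1) by (simp add: prod.remove)
  also have "bigQ_off E q ?F u = q e u * bigQ_off E q (insert e ?F) u"
    using bigQ_off_insert[OF finite_edges e(1) u(2) e(2)] .
  also have "(\<Prod>w\<in>set p - {u}. bigQ_off E q ?F w) = (\<Prod>w\<in>set p - {u}. bigQ_off E q (insert e ?F) w)"
    by (intro prod.cong refl bigQ_off_cong) (use only_u in blast)
  finally show ?thesis using u(1) by (simp add: prod.remove mult.assoc)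
qed

lemma path_weight_append:
  assumes g: "is_path X E g" "length g \<ge> 2" and p: "is_path X E p"
    and junction: "hd p = last g" and meet: "set g \<inter> set p = {last g}"
  defines "e \<equiv> {g ! (length g - 2), last g}"
  shows "path_weight E q (g @ tl p) =
    (\<Prod>u\<in>set g - {last g}. bigQ_off E q (set (path_edges g)) u) *
    (\<Prod>u\<in>set p. bigQ_off E q (insert e (set (path_edges p))) u)"
proof -
  let ?G = "set (path_edges g)" and ?P = "set (path_edges p)"
  have g0: "g \<noteq> []" and p0: "p \<noteq> []" using g(1) p by (simp_all add: is_path_nonempty)
  have edges: "set (path_edges (g @ tl p)) = ?G \<union> ?P"
    using path_edges_append[OF g0 p0 junction[symmetric]] by simp
  have "set p = insert (hd p) (set (tl p))" using p0 by (cases p) auto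
  then have cells: "set (g @ tl p) = (set g - {last g}) \<union> set p"
    using junction g0 by auto
  have e_in_G: "e \<in> ?G"
  proof -
    have i: "length g - 2 < length g - 1" "Suc (length g - 2) = length g - 1" using g(2) by linarith+
    then have "path_edges g ! (length g - 2) = e"
      unfolding e_def using g0 by (simp add: path_edges_nth last_conv_nth)
    then show ?thesis using i(1) nth_mem[of "length g - 2" "path_edges g"] by simp
  qed
  have on_g: "bigQ_off E q (?G \<union> ?P) u = bigQ_off E q ?G u" if "u \<in> set g - {last g}" for u
    using that meet path_edge_subset[of _ p] by (intro bigQ_off_cong) blast
  have on_p: "bigQ_off E q (?G \<union> ?P) u = bigQ_off E q (insert e ?P) u" if u: "u \<in> set p" for u
  proof (rule bigQ_off_cong)
    fix \<epsilon> assume "\<epsilon> \<in> E" "u \<in> \<epsilon>"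
    have "\<epsilon> = e" if "\<epsilon> \<in> ?G"
    proof -
      have "u = last g" using meet u path_edge_subset[OF that] \<open>u \<in> \<epsilon>\<close> by blast
      then show ?thesis
        using path_edge_at_last[OF distinct_path[OF g(1)] that] \<open>u \<in> \<epsilon>\<close> unfolding e_def by simp
    qed
    then show "\<epsilon> \<in> ?G \<union> ?P \<longleftrightarrow> \<epsilon> \<in> insert e ?P" using e_in_G by blast
  qed
  have "path_weight E q (g @ tl p) =
      (\<Prod>u\<in>set g - {last g}. bigQ_off E q (?G \<union> ?P) u) * (\<Prod>u\<in>set p. bigQ_off E q (?G \<union> ?P) u)"
    unfolding path_weight_def edges cells using meet by (intro prod.union_disjoint) auto
  then show ?thesis using on_g on_p by simp
qed

lemma prod_bigQ_off_linear_path: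
  assumes g: "is_path X E g" "linear_path E g"
  shows "(\<Prod>u\<in>set g - {last g}. bigQ_off E q (set (path_edges g)) u) = bigQ E q {g ! 0, g ! 1} (hd g)"
proof -
  let ?G = "set (path_edges g)"
  have len: "length g \<ge> 2" using g(2) by (simp add: linear_path_def)
  have dg: "distinct g" using distinct_path[OF g(1)] .
  have g0: "g \<noteq> []" using len by auto
  have hd_last: "hd g = g ! 0" "last g = g ! (length g - 1)"
    using g0 by (simp_all add: hd_conv_nth last_conv_nth)
  have "hd g \<noteq> last g" using nth_eq_iff_index_eq[OF dg, of 0 "length g - 1"] len g0 hd_last by simp
  then have hd_in: "hd g \<in> set g - {last g}" using g0 by simp
  have interior: "bigQ_off E q ?G u = 1" if u: "u \<in> set g - {last g} - {hd g}" for u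
  proof -
    obtain i where i: "i < length g" "u = g ! i" using u by (auto simp: in_set_conv_nth)
    have "u \<noteq> hd g" "u \<noteq> last g" using u by auto
    then have "i \<noteq> 0" "i \<noteq> length g - 1" using i(2) hd_last by metis+
    then have "0 < i" "i < length g - 1" using i(1) by linarith+
    then show ?thesis
      using linear_path_interior_edges[OF g] edge_at_valency_two_cell[OF g(1)] i(2)
      by (intro bigQ_off_all_excluded) (metis g(2) linear_path_def)
  qed
  have e0: "{g ! 0, g ! 1} \<in> ?G"
    using len by (simp add: in_set_path_edges exI[of _ 0])
  have at_hd: "bigQ_off E q ?G (hd g) = bigQ E q {g ! 0, g ! 1} (hd g)"
    unfolding bigQ_eq_bigQ_off
    by (rule bigQ_off_cong) (use path_edge_at_hd[OF dg] e0 in blast)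
  have "(\<Prod>u\<in>set g - {last g}. bigQ_off E q ?G u)
      = bigQ_off E q ?G (hd g) * (\<Prod>u\<in>set g - {last g} - {hd g}. bigQ_off E q ?G u)"
    using hd_in by (simp add: prod.remove)
  then show ?thesis using interior at_hd by simp
qed

text \<open>At an interior cell Q of one edge is q of the other, so the negative determinants of
  consecutive edges can be chained.\<close>
lemma linear_path_det_chain:
  assumes g: "is_path X E g" "linear_path E g"
    and det: "\<And>i. i < length g - 1 \<Longrightarrow> edge_det E q (g ! i) (g ! Suc i) < 0"
    and fwd: "\<And>i. i < length g - 1 \<Longrightarrow> 0 < q {g ! i, g ! Suc i} (g ! i)"
    and last_pos: "0 < bigQ E q {g ! (length g - 2), g ! (length g - 1)} (g ! (length g - 1))"
  shows "q {g ! 0, g ! 1} (g ! 0) * q {g ! (length g - 2), g ! (length g - 1)} (g ! (length g - 1))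
    < bigQ E q {g ! 0, g ! 1} (g ! 0) * bigQ E q {g ! (length g - 2), g ! (length g - 1)} (g ! (length g - 1))"
proof -
  let ?n = "length g - 1"
  let ?a = "q {g ! 0, g ! 1} (g ! 0)" and ?c = "bigQ E q {g ! 0, g ! 1} (g ! 0)"
  have len: "2 \<le> length g" using g(2) by (simp add: linear_path_def)
  have "?a * q {g ! (k - 1), g ! k} (g ! k) < ?c * bigQ E q {g ! (k - 1), g ! k} (g ! k)"
    if "1 \<le> k" "k \<le> ?n" for k
    using that
  proof (induction k rule: dec_induct)
    case base
    show ?case using det[of 0] len unfolding edge_det_def by simp
  next
    case (step k)
    then have k: "0 < k" "k < ?n" by auto
    let ?s = "q {g ! k, g ! Suc k} (g ! k)"
    have "0 < ?a" using fwd[of 0] len by simp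
    moreover have "0 < bigQ E q {g ! k, g ! Suc k} (g ! Suc k)"
    proof (cases "Suc k < ?n")
      case True
      then show ?thesis
        using bigQ_linear_path_interior(1)[OF g, of "Suc k" q] fwd[of "Suc k"] by simp
    next
      case False
      then have "Suc k = ?n" "k = length g - 2" using k by linarith+
      then show ?thesis using last_pos by simp
    qed
    moreover have "?s * q {g ! k, g ! Suc k} (g ! Suc k)
        < q {g ! (k - 1), g ! k} (g ! k) * bigQ E q {g ! k, g ! Suc k} (g ! Suc k)"
      using det[OF k(2)] bigQ_linear_path_interior(2)[OF g k, of q] unfolding edge_det_def by simp
    moreover have "?a * q {g ! (k - 1), g ! k} (g ! k) < ?c * ?s"
      using step.IH[OF less_imp_le[OF k(2)]] bigQ_linear_path_interior(1)[OF g k, of q] by simp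
    ultimately have "?a * q {g ! k, g ! Suc k} (g ! Suc k) < ?c * bigQ E q {g ! k, g ! Suc k} (g ! Suc k)"
      by (rule mult_ratio_less_trans[OF fwd[OF k(2)]])
    then show ?case by simp
  qed
  moreover have "?n - 1 = length g - 2" "1 \<le> ?n" using len by linarith+
  ultimately show ?thesis by (metis order_refl)
qed

end

locale rooted_decorated_tree =
  fixes V A :: "'a set" and E :: "'a set set" and f :: "'a \<Rightarrow> int"
    and q :: "'a set \<Rightarrow> 'a \<Rightarrow> int" and v0 :: 'a
  assumes rooted: "decorated_rooted_tree V A E f q v0"

sublocale rooted_decorated_tree \<subseteq> tree "V \<union> A" E
  using rooted unfolding decorated_rooted_tree_def decorated_tree_def by unfold_locales simp

context rooted_decorated_tree
begin

abbreviation tree_path :: "'a \<Rightarrow> 'a \<Rightarrow> 'a list" where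
  "tree_path \<equiv> gpath (V \<union> A) E"

lemma vertices_arrows_disjoint: "V \<inter> A = {}"
  and valency_arrow: "\<alpha> \<in> A \<Longrightarrow> valency E \<alpha> = 1"
  and q_arrow: "e \<in> E \<Longrightarrow> \<alpha> \<in> A \<Longrightarrow> \<alpha> \<in> e \<Longrightarrow> q e \<alpha> = 1"
  using rooted unfolding decorated_rooted_tree_def decorated_tree_def by auto

lemma root_vertex: "v0 \<in> V"
  using rooted unfolding decorated_rooted_tree_def is_root_def by simp

lemma q_ge_1_off_root_path:
  assumes u: "u \<in> V \<union> A" and e: "e \<in> E" "u \<in> e"
    and off: "e \<notin> set (path_edges (tree_path v0 u))"
  shows "1 \<le> q e u"
  using rooted u e off q_arrow[OF e(1) _ e(2)]
  unfolding decorated_rooted_tree_def is_root_def by (cases "u = v0") auto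

lemma q_ge_1_away_from_root:
  assumes w: "w \<in> V \<union> A" and u: "u \<in> set (tree_path v0 w)" and e: "{u, w} \<in> E"
  shows "1 \<le> q {u, w} u"
proof -
  let ?r = "tree_path v0 w"
  have r: "is_path (V \<union> A) E ?r" "hd ?r = v0" "last ?r = w"
    using root_vertex w by (simp_all add: is_path_gpath hd_gpath last_gpath)
  have uX: "u \<in> V \<union> A" using is_path_subset[OF r(1) u] .
  have "u \<noteq> w" using card_edge[OF e] by auto
  have split: "?r = tree_path v0 u @ tl (tree_path u w)"
    using gpath_split[OF r(1) u] r by simp
  have "tree_path u w \<noteq> []" "last (tree_path u w) = w" "hd (tree_path u w) = u"
    using is_path_nonempty[OF is_path_gpath[OF uX w]] uX w by (simp_all add: last_gpath hd_gpath)
  then have "w \<in> set (tl (tree_path u w))" using \<open>u \<noteq> w\<close>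
    by (metis last_in_set last_tl list.collapse set_ConsD)
  then have "w \<notin> set (tree_path v0 u)"
    using distinct_path[OF r(1)] split by (metis disjoint_iff distinct_append)
  then have "{u, w} \<notin> set (path_edges (tree_path v0 u))"
    using path_edge_subset by blast
  then show ?thesis using q_ge_1_off_root_path[OF uX e] by simp
qed

lemma linear_path_vertices:
  assumes g: "is_path (V \<union> A) E g" "linear_path E g" and ends: "hd g \<in> V" "last g \<in> V"
  shows "set g \<subseteq> V"
proof
  fix u assume "u \<in> set g"
  then obtain i where i: "i < length g" "u = g ! i" by (auto simp: in_set_conv_nth)
  have g0: "g \<noteq> []" using i by auto
  show "u \<in> V"
  proof (cases "i = 0 \<or> i = length g - 1")
    case True
    then show ?thesis using ends g0 i by (auto simp: hd_conv_nth last_conv_nth)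
  next
    case False
    then have "valency E u = 2" using g(2) i unfolding linear_path_def by auto
    then show ?thesis using is_path_subset[OF g(1) \<open>u \<in> set g\<close>] valency_arrow by fastforce
  qed
qed

end

locale linear_segment = rooted_decorated_tree +
  fixes v v' :: 'a
  assumes negative_dets: "negative_determinants V E q"
    and f_nonneg: "\<forall>\<alpha>\<in>A. 0 \<le> f \<alpha>"
    and v: "v \<in> V" and v': "v' \<in> V"
    and v_less_v': "tree_less V A E v0 v v'"
    and linear: "linear_path E (gpath (V \<union> A) E v v')"
begin

abbreviation "\<gamma> \<equiv> tree_path v v'"
abbreviation "n \<equiv> length \<gamma> - 1"
abbreviation "e_first \<equiv> {\<gamma> ! 0, \<gamma> ! 1}"
abbreviation "e_last \<equiv> {\<gamma> ! (n - 1), \<gamma> ! n}"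
abbreviation "root_path \<equiv> tree_path v0 v'"
abbreviation "arrow_term \<alpha> \<equiv>
  q e_first v * x_va V A E f q v' \<alpha> - bigQ E q e_last v' * x_va V A E f q v \<alpha>"

lemma gamma: "is_path (V \<union> A) E \<gamma>" "hd \<gamma> = v" "last \<gamma> = v'"
  using v v' by (simp_all add: is_path_gpath hd_gpath last_gpath)

lemma root_path: "is_path (V \<union> A) E root_path" "hd root_path = v0" "last root_path = v'"
  using root_vertex v' by (simp_all add: is_path_gpath hd_gpath last_gpath)

lemma gamma_length: "2 \<le> length \<gamma>"
  using linear by (simp add: linear_path_def)

lemma gamma_indices: "0 < n" "Suc (n - 1) = n" "length \<gamma> - 2 = n - 1" "1 < length \<gamma>"
  using gamma_length by linarith+

lemma gamma_first_edge: "e_first \<in> E" and gamma_last_edge: "e_last \<in> E"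
  using is_path_edge[OF gamma(1), of 0] is_path_edge[OF gamma(1), of "n - 1"] gamma_indices
  by simp_all

lemma gamma_ends: "\<gamma> ! 0 = v" "\<gamma> ! n = v'"
  using gamma is_path_nonempty[OF gamma(1)] by (simp_all add: hd_conv_nth last_conv_nth)

lemma gamma_vertices: "set \<gamma> \<subseteq> V"
  using linear_path_vertices[OF gamma(1) linear] gamma v v' by simp

lemma gamma_suffix: obtains k where "k < length root_path" "\<gamma> = drop k root_path"
proof -
  have "v \<in> set root_path" using v_less_v' by (simp add: tree_less_def)
  then obtain k where "k < length root_path" "v = root_path ! k" by (auto simp: in_set_conv_nth)
  then show thesis using that gpath_drop[OF root_path(1)] root_path by simp
qed

lemma root_path_length: "2 \<le> length root_path"
  and root_path_last_but_one: "root_path ! (length root_path - 2) = \<gamma> ! (n - 1)"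
proof -
  obtain k where k: "k < length root_path" "\<gamma> = drop k root_path" using gamma_suffix .
  then have len: "length \<gamma> = length root_path - k" by simp
  then show "2 \<le> length root_path" using gamma_length by linarith
  show "root_path ! (length root_path - 2) = \<gamma> ! (n - 1)"
    using k(2) len gamma_length by (simp add: numeral_2_eq_2 add.commute)
qed

lemma edge_at_end_of_root_path:
  "e \<in> set (path_edges root_path) \<Longrightarrow> v' \<in> e \<Longrightarrow> e = e_last"
  using path_edge_at_last[OF distinct_path[OF root_path(1)]] root_path(3) root_path_last_but_one
    gamma_ends by simp

lemma q_ge_1_along_gamma: assumes i: "i < n" shows "1 \<le> q {\<gamma> ! i, \<gamma> ! Suc i} (\<gamma> ! i)"
proof -
  obtain k where k: "k < length root_path" "\<gamma> = drop k root_path" using gamma_suffix .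
  have j: "k + Suc i < length root_path" using k i by auto
  have "\<gamma> ! i = root_path ! (k + i)" "\<gamma> ! Suc i = root_path ! (k + Suc i)" using k j by simp_all
  moreover have "tree_path v0 (root_path ! (k + Suc i)) = take (Suc (k + Suc i)) root_path"
    using gpath_take[OF root_path(1) j] root_path by simp
  moreover have "root_path ! (k + i) \<in> set (take (Suc (k + Suc i)) root_path)"
    using nth_mem[of "k + i" "take (Suc (k + Suc i)) root_path"] j by simp
  ultimately have "\<gamma> ! i \<in> set (tree_path v0 (\<gamma> ! Suc i))" by simp
  moreover have "\<gamma> ! Suc i \<in> V" using gamma_vertices i by auto
  moreover have "{\<gamma> ! i, \<gamma> ! Suc i} \<in> E" using is_path_edge[OF gamma(1)] i by simp
  ultimately show ?thesis by (intro q_ge_1_away_from_root) auto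
qed

lemma q_first_pos: "0 < q e_first v"
  using q_ge_1_along_gamma[of 0] gamma_length gamma_ends by simp

lemma bigQ_last_pos: "0 < bigQ E q e_last v'"
  unfolding bigQ_def
proof (rule prod_pos)
  fix e assume e: "e \<in> {e' \<in> E. v' \<in> e' \<and> e' \<noteq> e_last}"
  have "e \<notin> set (path_edges root_path)" using edge_at_end_of_root_path e by blast
  then show "0 < q e v'" using q_ge_1_off_root_path[of v' e] v' e by force
qed

lemma gamma_det_chain: "q e_first v * q e_last v' < bigQ E q e_first v * bigQ E q e_last v'"
proof -
  have "n - 1 = length \<gamma> - 2" by simp
  moreover have "edge_det E q (\<gamma> ! i) (\<gamma> ! Suc i) < 0" if "i < n" for i
    using negative_dets gamma_vertices is_path_edge[OF gamma(1)] that
    unfolding negative_determinants_def by (simp add: subset_iff)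
  moreover have "0 < q {\<gamma> ! i, \<gamma> ! Suc i} (\<gamma> ! i)" if "i < n" for i
    using q_ge_1_along_gamma[OF that] by simp
  ultimately show ?thesis
    using linear_path_det_chain[OF gamma(1) linear] bigQ_last_pos gamma_ends by simp
qed

lemma path_to_arrow:
  assumes "\<alpha> \<in> A" "w \<in> V"
  shows "is_path (V \<union> A) E (tree_path w \<alpha>)" "hd (tree_path w \<alpha>) = w" "last (tree_path w \<alpha>) = \<alpha>"
  using assms by (simp_all add: is_path_gpath hd_gpath last_gpath)

lemma arrow_not_in_gamma: "\<alpha> \<in> A \<Longrightarrow> \<alpha> \<notin> set \<gamma>"
  using gamma_vertices vertices_arrows_disjoint by blast

lemma x_va_eq_path_weight:
  "\<alpha> \<in> A \<Longrightarrow> w \<in> V \<Longrightarrow> x_va V A E f q w \<alpha> = f \<alpha> * path_weight E q (tree_path w \<alpha>)"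
  unfolding x_va_def using prod_incident_edges_eq_path_weight[OF path_to_arrow(1)] by simp

lemma path_to_arrow_tl_nonempty:
  assumes "\<alpha> \<in> A" "w \<in> V"
  shows "tl (tree_path w \<alpha>) \<noteq> []"
proof
  assume "tl (tree_path w \<alpha>) = []"
  then have "tree_path w \<alpha> = [w]"
    using path_to_arrow[OF assms(1)] assms(2) is_path_nonempty by (metis Un_iff list.collapse)
  then show False using path_to_arrow[OF assms(1)] assms vertices_arrows_disjoint by force
qed

lemma away_decomposition:
  assumes a: "\<alpha> \<in> A" and away: "\<gamma> ! (n - 1) \<notin> set (tree_path v' \<alpha>)"
  shows "set \<gamma> \<inter> set (tree_path v' \<alpha>) = {v'}"
    and "tree_path v \<alpha> = \<gamma> @ tl (tree_path v' \<alpha>)"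
proof -
  let ?p = "tree_path v' \<alpha>"
  note p = path_to_arrow[OF a v']
  have "length \<gamma> - 2 = n - 1" by simp
  then show meet: "set \<gamma> \<inter> set ?p = {v'}"
    using paths_meet_at_junction[OF gamma(1) p(1)] gamma gamma_length away v' p by simp
  have "is_path (V \<union> A) E (\<gamma> @ tl ?p)"
    using is_path_append[OF gamma(1) p(1)] meet gamma p v' by simp
  moreover have "hd (\<gamma> @ tl ?p) = v" "last (\<gamma> @ tl ?p) = \<alpha>"
    using gamma is_path_nonempty[OF gamma(1)] path_to_arrow_tl_nonempty[OF a v'] p v'
    by (simp_all add: last_tl)
  ultimately show "tree_path v \<alpha> = \<gamma> @ tl ?p" using gpath_eq by metis
qed

lemma returning_decomposition:
  assumes a: "\<alpha> \<in> A" and returns: "\<gamma> ! (n - 1) \<in> set (tree_path v' \<alpha>)"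
  shows "set (rev \<gamma>) \<inter> set (tree_path v \<alpha>) = {v}"
    and "tree_path v' \<alpha> = rev \<gamma> @ tl (tree_path v \<alpha>)"
proof -
  let ?p = "tree_path v' \<alpha>" and ?pp = "tree_path v \<alpha>"
  note p = path_to_arrow[OF a v'] and pp = path_to_arrow[OF a v]
  have rev_g: "is_path (V \<union> A) E (rev \<gamma>)" "linear_path E (rev \<gamma>)"
    using is_path_rev[OF gamma(1)] linear_path_rev[OF linear] .
  have "rev \<gamma> ! 1 = \<gamma> ! (n - 1)" using gamma_length by (simp add: rev_nth)
  moreover have "last ?p \<noteq> rev \<gamma> ! i" if "i < length (rev \<gamma>) - 1" for i
    using arrow_not_in_gamma[OF a] p v' that nth_mem[of i "rev \<gamma>"] by auto
  ultimately have "last (rev \<gamma>) \<in> set ?p"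
    using linear_path_followed[OF rev_g p(1)] p v' returns gamma by (simp add: hd_rev)
  then have "v \<in> set ?p" using gamma by (simp add: last_rev)
  then have split: "?p = rev \<gamma> @ tl ?pp"
    using gpath_split[OF p(1) \<open>v \<in> set ?p\<close>] p v v' gpath_sym[of v v'] by simp
  then show "?p = rev \<gamma> @ tl ?pp" .
  have "distinct (rev \<gamma> @ tl ?pp)" using distinct_path[OF p(1)] split by simp
  moreover have "set ?pp = insert v (set (tl ?pp))"
    using pp v is_path_nonempty[OF pp(1)] by (metis Un_iff list.collapse list.simps(15))
  moreover have "v \<in> set \<gamma>" using gamma is_path_nonempty[OF gamma(1)] by (metis hd_in_set)
  ultimately show "set (rev \<gamma>) \<inter> set ?pp = {v}" by auto
qed

lemma away_root_decomposition:
  assumes a: "\<alpha> \<in> A" and away: "\<gamma> ! (n - 1) \<notin> set (tree_path v' \<alpha>)"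
  shows "set root_path \<inter> set (tree_path v' \<alpha>) = {v'}"
    and "tree_path v0 \<alpha> = root_path @ tl (tree_path v' \<alpha>)"
proof -
  let ?p = "tree_path v' \<alpha>"
  note p = path_to_arrow[OF a v']
  show meet: "set root_path \<inter> set ?p = {v'}"
    using paths_meet_at_junction[OF root_path(1) p(1)] root_path root_path_length
      root_path_last_but_one away p by simp
  have "is_path (V \<union> A) E (root_path @ tl ?p)"
    using is_path_append[OF root_path(1) p(1)] meet root_path p by simp
  moreover have "hd (root_path @ tl ?p) = v0" "last (root_path @ tl ?p) = \<alpha>"
    using root_path is_path_nonempty[OF root_path(1)] path_to_arrow_tl_nonempty[OF a v'] p
    by (simp_all add: last_tl)
  ultimately show "tree_path v0 \<alpha> = root_path @ tl ?p" using gpath_eq by metis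
qed

text \<open>Such an edge points away from the root, so the root conditions apply to it.\<close>
lemma away_q_ge_1:
  assumes a: "\<alpha> \<in> A" and away: "\<gamma> ! (n - 1) \<notin> set (tree_path v' \<alpha>)"
    and u: "u \<in> set (tree_path v' \<alpha>)"
    and e: "e \<in> E" "u \<in> e" "e \<notin> set (path_edges (tree_path v' \<alpha>))" "e \<noteq> e_last"
  shows "1 \<le> q e u"
proof -
  let ?p = "tree_path v' \<alpha>" and ?R = "root_path @ tl (tree_path v' \<alpha>)"
  note p = path_to_arrow[OF a v'] and R = away_root_decomposition[OF a away]
  have R_path: "is_path (V \<union> A) E ?R" "hd ?R = v0"
    using path_to_arrow[OF a root_vertex] R(2) by simp_all
  have "set ?p = insert v' (set (tl ?p))"
    using is_path_nonempty[OF p(1)] p(2) by (metis list.collapse list.simps(15))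
  moreover have "v' \<in> set root_path"
    using last_in_set[OF is_path_nonempty[OF root_path(1)]] root_path(3) by simp
  ultimately have "u \<in> set ?R" using u by auto
  then have "set (path_edges (tree_path v0 u)) \<subseteq> set (path_edges ?R)"
    using path_edges_gpath_prefix[OF R_path(1)] R_path(2) by simp
  also have "\<dots> = set (path_edges root_path) \<union> set (path_edges ?p)"
    using path_edges_append[OF is_path_nonempty[OF root_path(1)] is_path_nonempty[OF p(1)]]
      root_path p by simp
  finally have "e \<notin> set (path_edges (tree_path v0 u))"
  proof (rule contra_subsetD)
    show "e \<notin> set (path_edges root_path) \<union> set (path_edges ?p)"
    proof
      assume "e \<in> set (path_edges root_path) \<union> set (path_edges ?p)"
      then have e_r: "e \<in> set (path_edges root_path)" using e(3) by simp
      then have "u = v'" using path_edge_subset[OF e_r] e(2) u R(1) by blast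
      then show False using edge_at_end_of_root_path[OF e_r] e(2,4) by simp
    qed
  qed
  then show ?thesis using q_ge_1_off_root_path e(1,2) is_path_subset[OF p(1) u] by simp
qed

lemma away_path_weights:
  assumes a: "\<alpha> \<in> A" and away: "\<gamma> ! (n - 1) \<notin> set (tree_path v' \<alpha>)"
  obtains Z where "1 \<le> Z"
    and "path_weight E q (tree_path v \<alpha>) = bigQ E q e_first v * Z"
    and "path_weight E q (tree_path v' \<alpha>) = q e_last v' * Z"
proof
  let ?p = "tree_path v' \<alpha>"
  let ?Z = "\<Prod>u\<in>set ?p. bigQ_off E q (insert e_last (set (path_edges ?p))) u"
  note p = path_to_arrow[OF a v'] and meet = away_decomposition[OF a away]
  have last_edge: "{\<gamma> ! (length \<gamma> - 2), last \<gamma>} = e_last"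
    using gamma gamma_ends by (simp add: numeral_2_eq_2)
  have "set \<gamma> \<inter> set ?p = {last \<gamma>}" "hd ?p = last \<gamma>" using meet(1) gamma p by simp_all
  then show "path_weight E q (tree_path v \<alpha>) = bigQ E q e_first v * ?Z"
    using path_weight_append[OF gamma(1) gamma_length p(1), of q]
      prod_bigQ_off_linear_path[OF gamma(1) linear] meet(2) gamma p last_edge by simp
  note gamma_last_edge
  moreover have "e_last \<notin> set (path_edges ?p)" using away path_edge_subset by blast
  moreover have "w = v'" if "w \<in> set ?p" "w \<in> e_last" for w
    using that away gamma_ends by auto
  ultimately show "path_weight E q ?p = q e_last v' * ?Z"
    using path_weight_extract_edge[OF p(1)] gamma_ends p(2) is_path_nonempty[OF p(1)]
    by (metis hd_in_set insertCI)
  show "1 \<le> ?Z" unfolding bigQ_off_def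
    by (intro prod_ge_1 ballI) (use away_q_ge_1[OF a away] in auto)
qed

lemma returning_path_weights:
  assumes a: "\<alpha> \<in> A" and returns: "\<gamma> ! (n - 1) \<in> set (tree_path v' \<alpha>)"
  obtains Z where "path_weight E q (tree_path v \<alpha>) = q e_first v * Z"
    and "path_weight E q (tree_path v' \<alpha>) = bigQ E q e_last v' * Z"
proof
  let ?pp = "tree_path v \<alpha>"
  let ?Z = "\<Prod>u\<in>set ?pp. bigQ_off E q (insert e_first (set (path_edges ?pp))) u"
  note pp = path_to_arrow[OF a v] and meet = returning_decomposition[OF a returns]
  have rev_g: "is_path (V \<union> A) E (rev \<gamma>)" "linear_path E (rev \<gamma>)" "2 \<le> length (rev \<gamma>)"
    using is_path_rev[OF gamma(1)] linear_path_rev[OF linear] gamma_length by simp_all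
  have l: "0 < length \<gamma>" "1 < length \<gamma>" "length \<gamma> - 2 < length \<gamma>"
    "length \<gamma> - Suc (length \<gamma> - 2) = 1" "length \<gamma> - 2 = n - 1"
    using gamma_length by linarith+
  have ends: "rev \<gamma> ! 0 = v'" "rev \<gamma> ! 1 = \<gamma> ! (n - 1)" "hd (rev \<gamma>) = v'" "last (rev \<gamma>) = v"
    "rev \<gamma> ! (length (rev \<gamma>) - 2) = \<gamma> ! 1"
    using gamma gamma_ends rev_nth[OF l(1)] rev_nth[OF l(2)] rev_nth[OF l(3)] l(4,5)
    by (simp_all add: hd_rev last_rev numeral_2_eq_2)
  have "{rev \<gamma> ! (length (rev \<gamma>) - 2), last (rev \<gamma>)} = e_first"
    using ends gamma_ends by (simp add: insert_commute)
  moreover have "set (rev \<gamma>) \<inter> set ?pp = {last (rev \<gamma>)}" "hd ?pp = last (rev \<gamma>)"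
    using meet(1) ends pp by simp_all
  ultimately show "path_weight E q (tree_path v' \<alpha>) = bigQ E q e_last v' * ?Z"
    using path_weight_append[OF rev_g(1,3) pp(1), of q]
      prod_bigQ_off_linear_path[OF rev_g(1,2)] meet(2) pp ends gamma_ends
    by (simp add: insert_commute)
  note gamma_first_edge
  moreover have "\<gamma> ! 1 \<noteq> v"
    using nth_eq_iff_index_eq[OF distinct_path[OF gamma(1)], of 1 0] gamma_ends l(1,2) by simp
  moreover have "\<gamma> ! 1 \<notin> set ?pp" using meet(1) nth_mem[OF l(2)] \<open>\<gamma> ! 1 \<noteq> v\<close> by auto
  moreover have "v \<in> set ?pp" using pp is_path_nonempty[OF pp(1)] by (metis hd_in_set)
  ultimately show "path_weight E q ?pp = q e_first v * ?Z"
    using path_weight_extract_edge[OF pp(1), of e_first v] path_edge_subset gamma_ends by auto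
qed

lemma forward_arrow_path_avoids_gamma:
  assumes a: "\<alpha> \<in> A" and forward: "tree_less V A E v0 v' \<alpha>"
  shows "\<gamma> ! (n - 1) \<notin> set (tree_path v' \<alpha>)"
proof
  let ?p = "tree_path v' \<alpha>" and ?R = "tree_path v0 \<alpha>"
  assume on_p: "\<gamma> ! (n - 1) \<in> set ?p"
  note p = path_to_arrow[OF a v'] and R = path_to_arrow[OF a root_vertex]
  have "v' \<in> set ?R" using forward by (simp add: tree_less_def)
  then have "?R = root_path @ tl ?p" using gpath_split[OF R(1)] R by simp
  then have "set root_path \<inter> set (tl ?p) = {}" using distinct_path[OF R(1)] by simp
  moreover have "\<gamma> ! (n - 1) \<in> set root_path"
    using root_path_last_but_one nth_mem[of "length root_path - 2" root_path] root_path_length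
    by simp
  moreover have "\<gamma> ! (n - 1) \<noteq> v'"
    using nth_eq_iff_index_eq[OF distinct_path[OF gamma(1)], of "n - 1" n] gamma_ends gamma_indices
    by simp
  moreover have "set ?p = insert v' (set (tl ?p))"
    using is_path_nonempty[OF p(1)] p(2) by (metis list.collapse list.simps(15))
  ultimately show False using on_p by blast
qed

lemma arrow_term_cases:
  assumes a: "\<alpha> \<in> A"
  obtains (away) Z where "1 \<le> Z"
      "arrow_term \<alpha>
        = f \<alpha> * Z * (q e_first v * q e_last v' - bigQ E q e_first v * bigQ E q e_last v')"
    | (returns) "\<gamma> ! (n - 1) \<in> set (tree_path v' \<alpha>)"
      "arrow_term \<alpha> = 0"
proof (cases "\<gamma> ! (n - 1) \<in> set (tree_path v' \<alpha>)")
  case True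
  then obtain Z where "path_weight E q (tree_path v \<alpha>) = q e_first v * Z"
      "path_weight E q (tree_path v' \<alpha>) = bigQ E q e_last v' * Z"
    using returning_path_weights[OF a] by blast
  then show thesis using returns True x_va_eq_path_weight[OF a] v v' by (simp add: algebra_simps)
next
  case False
  then obtain Z where "1 \<le> Z" "path_weight E q (tree_path v \<alpha>) = bigQ E q e_first v * Z"
      "path_weight E q (tree_path v' \<alpha>) = q e_last v' * Z"
    using away_path_weights[OF a] by blast
  then show thesis using away x_va_eq_path_weight[OF a] v v' by (simp add: algebra_simps)
qed

lemma arrow_term_nonpos:
  assumes "\<alpha> \<in> A"
  shows "arrow_term \<alpha> \<le> 0"
  using assms
proof (cases rule: arrow_term_cases)
  case (away Z)
  have "0 \<le> f \<alpha> * Z" using f_nonneg assms away(1) by simp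
  then show ?thesis using away(2) gamma_det_chain by (simp add: mult_nonneg_nonpos)
qed simp

lemma arrow_term_neg:
  assumes a: "\<alpha> \<in> A" and f: "0 < f \<alpha>" and forward: "tree_less V A E v0 v' \<alpha>"
  shows "arrow_term \<alpha> < 0"
  using a
proof (cases rule: arrow_term_cases)
  case (away Z)
  have "0 < f \<alpha> * Z" using f away(1) by simp
  then show ?thesis using away(2) gamma_det_chain by (simp add: mult_pos_neg)
next
  case returns
  then show ?thesis using forward_arrow_path_avoids_gamma[OF a forward] by simp
qed

end

theorem proposition5p8:
  fixes V A :: "'a set" and E :: "'a set set" and f :: "'a \<Rightarrow> int"
    and q :: "'a set \<Rightarrow> 'a \<Rightarrow> int" and v0 v v' :: 'a
  assumes "decorated_rooted_tree V A E f q v0"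
    and "negative_determinants V E q"
    and "\<forall>\<alpha>\<in>A. f \<alpha> \<ge> 0"
    and "v \<in> V" and "v' \<in> V"
    and "tree_less V A E v0 v v'"
    and "linear_path E (gpath (V \<union> A) E v v')"
  shows "let \<gamma> = gpath (V \<union> A) E v v'; n = length \<gamma> - 1;
             qq = q {\<gamma> ! 0, \<gamma> ! 1} v;
             Q' = bigQ E q {\<gamma> ! (n - 1), \<gamma> ! n} v';
             D = qq * N_v V A E f q v' - Q' * N_v V A E f q v
         in (qq > 0 \<and> Q' > 0 \<and> D \<le> 0) \<and>
            ((\<exists>\<alpha>\<in>A - A0 A f. tree_less V A E v0 v' \<alpha>) \<longrightarrow> D < 0)"
proof -
  interpret linear_segment V A E f q v0 v v'
    using assms by unfold_locales
  have D: "q e_first v * N_v V A E f q v' - bigQ E q e_last v' * N_v V A E f q v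
      = (\<Sum>\<alpha>\<in>A - A0 A f. arrow_term \<alpha>)"
    unfolding N_v_def by (simp add: sum_distrib_left sum_subtractf)
  have "(\<Sum>\<alpha>\<in>A - A0 A f. arrow_term \<alpha>) \<le> 0"
    by (rule sum_nonpos) (use arrow_term_nonpos in blast)
  moreover have "(\<Sum>\<alpha>\<in>A - A0 A f. arrow_term \<alpha>) < 0"
    if "\<exists>\<alpha>\<in>A - A0 A f. tree_less V A E v0 v' \<alpha>"
  proof -
    have "finite A" using rooted by (simp add: decorated_rooted_tree_def decorated_tree_def)
    then have "(\<Sum>\<alpha>\<in>A - A0 A f. arrow_term \<alpha>) < (\<Sum>\<alpha>\<in>A - A0 A f. 0)"
      using that f_nonneg arrow_term_nonpos arrow_term_neg
      by (intro sum_strict_mono_ex1) (auto simp: A0_def order_less_le)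
    then show ?thesis by simp
  qed
  ultimately show ?thesis unfolding Let_def D using q_first_pos bigQ_last_pos by simp
qed

end
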